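(* Let $g(\mu)=\mu^2$, let $T,C_1>0$, set $\mu^\ast:=\sqrt{C_1/T}$ (viewed as a constant function on $[0,T]$) and $\tau^\ast:=\sqrt{C_1T}$, and let $\Phi_h^\ast:=\nabla\Phi(\hat z(\tau^\ast))\cdot h(\hat z(\tau^\ast),p)$. If $\Phi_h^\ast>0$, then there exists $\delta>0$ such that $\Phi(z_\mu(T))\le\Phi(z_{\mu^\ast}(T))$ for every $\mu\in C([0,T],(0,\infty))$ with $\int_0^T\mu(t)^2\,\mathrm{d}t=C_1$ and $\sup_{t\in[0,T]}|\mu(t)-\mu^\ast|<\delta$, i.e. $\mu^\ast$ is a local maximizer of $\mu\mapsto\Phi(z_\mu(T))$ on this constraint set. If $\Phi_h^\ast<0$, the same holds with $\ge$ in place of $\le$ (local minimizer).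
   Context: Standing setup: $n,s\ge1$, $p\in\mathbb{R}^s$, $z_0\in\mathbb{R}^n$; $h:\mathbb{R}^n\times\mathbb{R}^s\to\mathbb{R}^n$ is continuously differentiable in its first argument and such that the autonomous initial value problem $\hat z'(\tau)=h(\hat z(\tau),p)$, $\hat z(0)=z_0$ has a unique solution $\hat z$ defined for all $\tau\in\mathbb{R}$. For $T>0$ and $\mu\in C([0,T],\mathbb{R})$, $z_\mu:[0,T]\to\mathbb{R}^n$ denotes the solution of $\dot z(t)=\mu(t)h(z(t),p)$, $z(0)=z_0$. $\Phi:\mathbb{R}^n\to\mathbb{R}$ is continuously differentiable. *)

theory Defs
  imports "HOL-Analysis.Analysis"
begin

definition C1_map :: "('a::real_normed_vector \<Rightarrow> 'b::real_normed_vector) \<Rightarrow> bool" where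
  "C1_map f \<longleftrightarrow> (\<exists>D. (\<forall>x. (f has_derivative blinfun_apply (D x)) (at x)) \<and> continuous_on UNIV D)"

definition ivp_sol :: "real \<Rightarrow> (real \<Rightarrow> real) \<Rightarrow> ('a::real_normed_vector \<Rightarrow> 'a) \<Rightarrow> 'a \<Rightarrow> (real \<Rightarrow> 'a) \<Rightarrow> bool" where
  "ivp_sol T mu F z0 z \<longleftrightarrow> z 0 = z0 \<and>
     (\<forall>t\<in>{0..T}. (z has_vector_derivative (mu t *\<^sub>R F (z t))) (at t within {0..T}))"

end

theory Submission
  imports Defs
begin

text \<open>The control only rescales time: the solution of \<open>z' = \<mu>(t) h(z, p)\<close> is the autonomous
  trajectory \<open>zhat\<close> evaluated at the accumulated time, \<open>z(T) = zhat (\<integral>\<^sub>0\<^sup>T \<mu>)\<close>.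
  By Cauchy--Schwarz \<open>(\<integral>\<mu>)\<^sup>2 \<le> T \<integral>\<mu>\<^sup>2 = C\<^sub>1 T\<close>, so every admissible control reaches at most the
  time \<open>\<tau>\<^sup>* = sqrt (C\<^sub>1 T)\<close>, which \<open>\<mu>\<^sup>*\<close> reaches exactly, while a control uniformly close to
  \<open>\<mu>\<^sup>*\<close> reaches a time just to the left of \<open>\<tau>\<^sup>*\<close>. There \<open>\<Phi> \<circ> zhat\<close> lies below its value
  at \<open>\<tau>\<^sup>*\<close> when its derivative \<open>\<Phi>\<^sub>h\<^sup>*\<close> is positive, and above it when it is negative.\<close>

lemma C1_map_lipschitz_on:
  fixes F :: "'a::real_normed_vector \<Rightarrow> 'b::real_normed_vector"
  assumes "C1_map F" "convex S" "compact S"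
  shows "\<exists>L. L-lipschitz_on S F"
proof -
  from assms(1) obtain D where D: "\<And>x. (F has_derivative blinfun_apply (D x)) (at x)"
    and "continuous_on UNIV D"
    unfolding C1_map_def by blast
  then have "bounded (D ` S)"
    using compact_continuous_image[OF continuous_on_subset[OF _ subset_UNIV] assms(3)]
      compact_imp_bounded by blast
  then obtain B where "\<forall>y\<in>D ` S. norm y \<le> B"
    unfolding bounded_iff by blast
  then have B: "\<And>x. x \<in> S \<Longrightarrow> norm (D x) \<le> B"
    by blast
  have "(max B 0)-lipschitz_on S F"
  proof (rule lipschitz_onI)
    fix x y assume "x \<in> S" "y \<in> S"
    show "dist (F x) (F y) \<le> max B 0 * dist x y"
      unfolding dist_norm
    proof (rule differentiable_bound[OF assms(2) _ _ \<open>x \<in> S\<close> \<open>y \<in> S\<close>])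
      show "(F has_derivative blinfun_apply (D x)) (at x within S)" for x
        using D has_derivative_at_withinI by blast
      show "onorm (blinfun_apply (D x)) \<le> max B 0" if "x \<in> S" for x
        using B[OF that] by (simp add: norm_blinfun.rep_eq[symmetric])
    qed
  qed simp
  then show ?thesis ..
qed

lemma vanishes_if_inner_derivative_le:
  fixes u :: "real \<Rightarrow> 'a::real_inner"
  assumes "0 \<le> t" "u 0 = 0" "continuous_on {0..t} u"
    and u': "\<And>x. x \<in> {0<..<t} \<Longrightarrow> (u has_vector_derivative u' x) (at x)"
    and growth: "\<And>x. x \<in> {0<..<t} \<Longrightarrow> u x \<bullet> u' x \<le> K * (u x \<bullet> u x)"
  shows "u t = 0"
proof -
  define f where "f s = exp (- 2 * K * s) * (u s \<bullet> u s)" for s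
  have "f t \<le> f 0"
  proof (rule DERIV_nonpos_imp_decreasing_open[OF assms(1)])
    show "continuous_on {0..t} f"
      unfolding f_def by (intro continuous_intros assms(3))
    fix x assume x: "0 < x" "x < t"
    have "(u has_derivative (\<lambda>h. h *\<^sub>R u' x)) (at x)"
      using u' x by (simp add: has_vector_derivative_def)
    from has_derivative_inner[OF this this]
    have inner_deriv: "((\<lambda>s. u s \<bullet> u s) has_real_derivative 2 * (u x \<bullet> u' x)) (at x)"
      unfolding has_field_derivative_def
      by (rule has_derivative_eq_rhs) (auto simp: inner_commute algebra_simps)
    have exp_deriv: "((\<lambda>s. exp (- 2 * K * s)) has_real_derivative exp (- 2 * K * x) * (- 2 * K)) (at x)"
      by (auto intro!: derivative_eq_intros)
    have "(f has_real_derivative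
        exp (- 2 * K * x) * (2 * (u x \<bullet> u' x)) + exp (- 2 * K * x) * (- 2 * K) * (u x \<bullet> u x)) (at x)"
      unfolding f_def[abs_def] by (rule DERIV_mult'[OF exp_deriv inner_deriv])
    moreover have "exp (- 2 * K * x) * (2 * (u x \<bullet> u' x)) + exp (- 2 * K * x) * (- 2 * K) * (u x \<bullet> u x)
        = 2 * exp (- 2 * K * x) * (u x \<bullet> u' x - K * (u x \<bullet> u x))"
      by (simp add: algebra_simps)
    moreover have "2 * exp (- 2 * K * x) * (u x \<bullet> u' x - K * (u x \<bullet> u x)) \<le> 0"
      using growth[of x] x by (intro mult_nonneg_nonpos) auto
    ultimately show "\<exists>y. (f has_real_derivative y) (at x) \<and> y \<le> 0" by metis
  qed
  then have "u t \<bullet> u t \<le> 0"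
    by (simp add: f_def assms(2) mult_le_0_iff)
  then have "u t \<bullet> u t = 0"
    using inner_ge_zero[of "u t"] by linarith
  then show ?thesis by simp
qed

lemma ivp_sol_continuous_on:
  assumes "ivp_sol T \<mu> F z0 z"
  shows "continuous_on {0..T} z"
  using assms has_vector_derivative_continuous continuous_on_eq_continuous_within
  unfolding ivp_sol_def by blast

lemma ivp_sol_unique:
  fixes F :: "'a::euclidean_space \<Rightarrow> 'a"
  assumes F: "C1_map F" and \<mu>: "continuous_on {0..T} \<mu>"
    and z1: "ivp_sol T \<mu> F z0 z1" and z2: "ivp_sol T \<mu> F z0 z2"
    and t: "t \<in> {0..T}"
  shows "z1 t = z2 t"
proof -
  have d1: "(z1 has_vector_derivative \<mu> s *\<^sub>R F (z1 s)) (at s within {0..T})"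
    and d2: "(z2 has_vector_derivative \<mu> s *\<^sub>R F (z2 s)) (at s within {0..T})"
    if "s \<in> {0..T}" for s
    using z1 z2 that unfolding ivp_sol_def by auto
  have "bounded (z1 ` {0..T} \<union> z2 ` {0..T})"
    using ivp_sol_continuous_on[OF z1] ivp_sol_continuous_on[OF z2]
    by (intro bounded_Un[THEN iffD2] conjI compact_imp_bounded compact_continuous_image) auto
  then obtain R where R: "\<And>s. s \<in> {0..T} \<Longrightarrow> z1 s \<in> cball 0 R \<and> z2 s \<in> cball 0 R"
    unfolding bounded_iff by fastforce
  obtain L where L: "L-lipschitz_on (cball 0 R) F"
    using C1_map_lipschitz_on[OF F convex_cball compact_cball] ..
  have "bounded (\<mu> ` {0..T})"
    using \<mu> by (intro compact_imp_bounded compact_continuous_image) auto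
  then obtain M where M: "\<And>s. s \<in> {0..T} \<Longrightarrow> \<bar>\<mu> s\<bar> \<le> M"
    unfolding bounded_iff by fastforce
  have "z1 t - z2 t = 0"
  proof (rule vanishes_if_inner_derivative_le[where K = "M * L"])
    show "0 \<le> t" using t by simp
    show "z1 0 - z2 0 = 0" using z1 z2 by (simp add: ivp_sol_def)
    show "continuous_on {0..t} (\<lambda>s. z1 s - z2 s)"
      using t by (intro continuous_intros continuous_on_subset[OF ivp_sol_continuous_on[OF z1]]
          continuous_on_subset[OF ivp_sol_continuous_on[OF z2]]) auto
    fix s assume s: "s \<in> {0<..<t}"
    then have sT: "s \<in> {0..T}" and "at s within {0..T} = at s"
      using t at_within_Icc_at[of 0 s T] by auto
    then show "((\<lambda>s. z1 s - z2 s) has_vector_derivative \<mu> s *\<^sub>R (F (z1 s) - F (z2 s))) (at s)"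
      using has_vector_derivative_diff[OF d1[OF sT] d2[OF sT]] by (simp add: scaleR_diff_right)
    let ?v = "\<mu> s *\<^sub>R (F (z1 s) - F (z2 s))" and ?u = "z1 s - z2 s"
    have "norm (F (z1 s) - F (z2 s)) \<le> L * norm ?u"
      using lipschitz_on_normD[OF L] R[OF sT] by blast
    then have "norm ?v \<le> M * (L * norm ?u)"
      using M[OF sT] by (simp add: mult_mono')
    have "?u \<bullet> ?v \<le> norm ?u * norm ?v"
      by (rule norm_cauchy_schwarz)
    also have "\<dots> \<le> norm ?u * (M * (L * norm ?u))"
      using \<open>norm ?v \<le> M * (L * norm ?u)\<close> by (rule mult_left_mono) simp
    also have "\<dots> = M * L * (?u \<bullet> ?u)"
      by (simp add: dot_square_norm power2_eq_square)
    finally show "?u \<bullet> ?v \<le> M * L * (?u \<bullet> ?u)" .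
  qed
  then show ?thesis by simp
qed

lemma ivp_sol_eq_reparametrized:
  fixes F :: "'a::euclidean_space \<Rightarrow> 'a"
  assumes F: "C1_map F" and \<mu>: "continuous_on {0..T} \<mu>"
    and zhat: "zhat 0 = z0" "\<And>\<tau>. (zhat has_vector_derivative F (zhat \<tau>)) (at \<tau>)"
    and z: "ivp_sol T \<mu> F z0 z" and t: "t \<in> {0..T}"
  shows "z t = zhat (integral {0..t} \<mu>)"
proof -
  have "ivp_sol T \<mu> F z0 (\<lambda>s. zhat (integral {0..s} \<mu>))"
    unfolding ivp_sol_def
  proof (intro conjI ballI)
    show "zhat (integral {0..0} \<mu>) = z0" using zhat(1) by simp
    fix s assume "s \<in> {0..T}"
    from vector_diff_chain_within[OF integral_has_vector_derivative[OF \<mu> this]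
        has_vector_derivative_at_within[OF zhat(2)]]
    show "((\<lambda>s. zhat (integral {0..s} \<mu>)) has_vector_derivative
        \<mu> s *\<^sub>R F (zhat (integral {0..s} \<mu>))) (at s within {0..T})"
      by (simp add: o_def)
  qed
  with ivp_sol_unique[OF F \<mu> z _ t] show ?thesis .
qed

lemma square_integral_le:
  fixes f :: "real \<Rightarrow> real"
  assumes f: "continuous_on {a..b} f" and "a < b"
  shows "(integral {a..b} f)\<^sup>2 \<le> (b - a) * integral {a..b} (\<lambda>t. (f t)\<^sup>2)"
proof -
  define I where "I = integral {a..b} f"
  define J where "J = integral {a..b} (\<lambda>t. (f t)\<^sup>2)"
  define c where "c = I / (b - a)"
  \<comment> \<open>expand \<open>0 \<le> \<integral>(f - c)\<^sup>2\<close> around the mean value \<open>c\<close> of \<open>f\<close>\<close>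
  have hI: "(f has_integral I) {a..b}"
    unfolding I_def using integrable_continuous_interval[OF f] by blast
  have hJ: "((\<lambda>t. (f t)\<^sup>2) has_integral J) {a..b}"
    unfolding J_def using integrable_continuous_interval[OF continuous_on_power[OF f]] by blast
  have "((\<lambda>t. (f t)\<^sup>2 - 2 * c * f t + c\<^sup>2) has_integral J - 2 * c * I + c\<^sup>2 * (b - a)) {a..b}"
    using has_integral_add[OF has_integral_diff[OF hJ has_integral_mult_right[OF hI, of "2 * c"]]
        has_integral_const_real[of "c\<^sup>2" a b]] \<open>a < b\<close>
    by (simp add: mult.commute)
  moreover have "(f t)\<^sup>2 - 2 * c * f t + c\<^sup>2 = (f t - c)\<^sup>2" for t
    by (simp add: power2_eq_square algebra_simps)
  ultimately have "((\<lambda>t. (f t - c)\<^sup>2) has_integral J - 2 * c * I + c\<^sup>2 * (b - a)) {a..b}"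
    by simp
  then have "0 \<le> J - 2 * c * I + c\<^sup>2 * (b - a)"
    by (rule has_integral_nonneg) simp
  moreover have cI: "c * (b - a) = I"
    using \<open>a < b\<close> by (simp add: c_def)
  then have "c\<^sup>2 * (b - a) = c * I"
    by (simp add: power2_eq_square mult.assoc)
  ultimately have "c * I \<le> J"
    by linarith
  then have "(b - a) * (c * I) \<le> (b - a) * J"
    using \<open>a < b\<close> by simp
  moreover have "(b - a) * (c * I) = I\<^sup>2"
    using cI by (simp add: power2_eq_square mult.commute mult.left_commute)
  ultimately show ?thesis
    unfolding I_def[symmetric] J_def[symmetric] by simp
qed

lemma has_real_derivative_frechet_comp:
  fixes f :: "'a::real_normed_vector \<Rightarrow> real"
  assumes "f differentiable at (g x)" and "(g has_vector_derivative v) (at x)"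
  shows "((\<lambda>t. f (g t)) has_real_derivative frechet_derivative f (at (g x)) v) (at x)"
proof -
  have df: "(f has_derivative frechet_derivative f (at (g x))) (at (g x))"
    using assms(1) frechet_derivative_works by blast
  from diff_chain_at[OF assms(2)[unfolded has_vector_derivative_def] df]
  show ?thesis
    unfolding has_field_derivative_def o_def
    by (rule has_derivative_eq_rhs)
      (auto simp: linear_scale[OF has_derivative_linear[OF df]] mult.commute)
qed

lemma sqrt_divide_mult_self:
  assumes "T > 0"
  shows "sqrt (C / T) * T = sqrt (C * T)"
proof -
  have "sqrt (C / T) * T = sqrt (C / T) * sqrt (T\<^sup>2)"
    using assms by simp
  also have "\<dots> = sqrt (C / T * T\<^sup>2)"
    by (rule real_sqrt_mult[symmetric])
  also have "C / T * T\<^sup>2 = C * T"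
    using assms by (simp add: power2_eq_square)
  finally show ?thesis .
qed

lemma integral_bounds_near_constant_control:
  fixes \<mu> :: "real \<Rightarrow> real"
  assumes T: "T > 0" and \<mu>: "continuous_on {0..T} \<mu>"
    and energy: "integral {0..T} (\<lambda>t. (\<mu> t)\<^sup>2) = C"
    and close: "\<forall>t\<in>{0..T}. \<bar>\<mu> t - sqrt (C / T)\<bar> < \<delta>"
  shows "sqrt (C * T) - \<delta> * T \<le> integral {0..T} \<mu>" and "integral {0..T} \<mu> \<le> sqrt (C * T)"
proof -
  have "sqrt (C / T) - \<delta> \<le> \<mu> t" if "t \<in> {0..T}" for t
    using close[rule_format, OF that] by (simp add: abs_less_iff)
  then have "integral {0..T} (\<lambda>_. sqrt (C / T) - \<delta>) \<le> integral {0..T} \<mu>"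
    using integrable_continuous_interval[OF \<mu>] by (intro integral_le) auto
  then show "sqrt (C * T) - \<delta> * T \<le> integral {0..T} \<mu>"
    using T sqrt_divide_mult_self[OF T, of C] by (simp add: algebra_simps)
  have "(integral {0..T} \<mu>)\<^sup>2 \<le> C * T"
    using square_integral_le[OF \<mu> T] energy by (simp add: mult.commute)
  then have "\<bar>integral {0..T} \<mu>\<bar> \<le> sqrt (C * T)"
    using real_sqrt_le_mono by fastforce
  then show "integral {0..T} \<mu> \<le> sqrt (C * T)"
    by linarith
qed

lemma local_max_over_controls:
  fixes g :: "real \<Rightarrow> real"
  assumes T: "T > 0" and g: "(g has_real_derivative l) (at (sqrt (C * T)))" and "l > 0"
  shows "\<exists>\<delta>>0. \<forall>\<mu>. continuous_on {0..T} \<mu> \<and> integral {0..T} (\<lambda>t. (\<mu> t)\<^sup>2) = C \<and>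
      (\<forall>t\<in>{0..T}. \<bar>\<mu> t - sqrt (C / T)\<bar> < \<delta>) \<longrightarrow> g (integral {0..T} \<mu>) \<le> g (sqrt (C * T))"
proof -
  obtain d where "d > 0" and d: "\<And>s. 0 < s \<Longrightarrow> s < d \<Longrightarrow> g (sqrt (C * T) - s) < g (sqrt (C * T))"
    using DERIV_pos_inc_left[OF g \<open>l > 0\<close>] by blast
  show ?thesis
  proof (intro exI[of _ "d / (2 * T)"] conjI allI impI)
    show "d / (2 * T) > 0" using \<open>d > 0\<close> T by simp
    fix \<mu>
    assume "continuous_on {0..T} \<mu> \<and> integral {0..T} (\<lambda>t. (\<mu> t)\<^sup>2) = C \<and>
      (\<forall>t\<in>{0..T}. \<bar>\<mu> t - sqrt (C / T)\<bar> < d / (2 * T))"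
    then have lower: "sqrt (C * T) - d / (2 * T) * T \<le> integral {0..T} \<mu>"
      and upper: "integral {0..T} \<mu> \<le> sqrt (C * T)"
      using integral_bounds_near_constant_control[OF T] by blast+
    show "g (integral {0..T} \<mu>) \<le> g (sqrt (C * T))"
    proof (cases "integral {0..T} \<mu> = sqrt (C * T)")
      case False
      have "d / (2 * T) * T < d" using \<open>d > 0\<close> T by simp
      then have "0 < sqrt (C * T) - integral {0..T} \<mu>" "sqrt (C * T) - integral {0..T} \<mu> < d"
        using False lower upper by linarith+
      from d[OF this] show ?thesis by simp
    qed simp
  qed
qed

theorem mainTheorem8:
  fixes h :: "real^'n \<Rightarrow> real^'s \<Rightarrow> real^'n"
    and p :: "real^'s" and z0 :: "real^'n"
    and zhat :: "real \<Rightarrow> real^'n"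
    and \<Phi> :: "real^'n \<Rightarrow> real"
    and T C1 :: real
  assumes h_C1: "\<forall>q. C1_map (\<lambda>z. h z q)"
    and zhat_sol: "zhat 0 = z0" "\<forall>\<tau>. (zhat has_vector_derivative h (zhat \<tau>) p) (at \<tau>)"
    and zhat_unique: "\<forall>y. y 0 = z0 \<and> (\<forall>\<tau>. (y has_vector_derivative h (y \<tau>) p) (at \<tau>)) \<longrightarrow> y = zhat"
    and Phi_C1: "C1_map \<Phi>"
    and T_pos: "T > 0" and C1_pos: "C1 > 0"
  shows "(let mstar = sqrt (C1 / T); tstar = sqrt (C1 * T);
              Ph = frechet_derivative \<Phi> (at (zhat tstar)) (h (zhat tstar) p)
          in (Ph > 0 \<longrightarrow>
                (\<exists>\<delta>>0. \<forall>\<mu> z w.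
                   continuous_on {0..T} \<mu> \<and> (\<forall>t\<in>{0..T}. \<mu> t > 0) \<and>
                   integral {0..T} (\<lambda>t. (\<mu> t)\<^sup>2) = C1 \<and>
                   (\<forall>t\<in>{0..T}. \<bar>\<mu> t - mstar\<bar> < \<delta>) \<and>
                   ivp_sol T \<mu> (\<lambda>x. h x p) z0 z \<and>
                   ivp_sol T (\<lambda>_. mstar) (\<lambda>x. h x p) z0 w
                   \<longrightarrow> \<Phi> (z T) \<le> \<Phi> (w T))) \<and>
             (Ph < 0 \<longrightarrow>
                (\<exists>\<delta>>0. \<forall>\<mu> z w.
                   continuous_on {0..T} \<mu> \<and> (\<forall>t\<in>{0..T}. \<mu> t > 0) \<and>
                   integral {0..T} (\<lambda>t. (\<mu> t)\<^sup>2) = C1 \<and>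
                   (\<forall>t\<in>{0..T}. \<bar>\<mu> t - mstar\<bar> < \<delta>) \<and>
                   ivp_sol T \<mu> (\<lambda>x. h x p) z0 z \<and>
                   ivp_sol T (\<lambda>_. mstar) (\<lambda>x. h x p) z0 w
                   \<longrightarrow> \<Phi> (z T) \<ge> \<Phi> (w T))))"
proof -
  define tstar where "tstar = sqrt (C1 * T)"
  define Ph where "Ph = frechet_derivative \<Phi> (at (zhat tstar)) (h (zhat tstar) p)"
  have zhat_deriv: "\<And>\<tau>. (zhat has_vector_derivative h (zhat \<tau>) p) (at \<tau>)"
    using zhat_sol(2) by blast
  have zT: "z T = zhat (integral {0..T} \<mu>)"
    if "continuous_on {0..T} \<mu>" "ivp_sol T \<mu> (\<lambda>x. h x p) z0 z" for \<mu> z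
    using ivp_sol_eq_reparametrized[OF h_C1[rule_format, of p] that(1) zhat_sol(1) zhat_deriv that(2)]
      T_pos by simp
  have wT: "w T = zhat tstar" if "ivp_sol T (\<lambda>_. sqrt (C1 / T)) (\<lambda>x. h x p) z0 w" for w
    using zT[OF continuous_on_const that] sqrt_divide_mult_self[OF T_pos] T_pos
    by (simp add: tstar_def mult.commute)
  have "\<Phi> differentiable at (zhat tstar)"
    using Phi_C1 unfolding C1_map_def differentiable_def by blast
  from has_real_derivative_frechet_comp[OF this zhat_deriv]
  have Ph: "((\<lambda>\<tau>. \<Phi> (zhat \<tau>)) has_real_derivative Ph) (at (sqrt (C1 * T)))"
    unfolding Ph_def tstar_def .
  show ?thesis
    unfolding Let_def tstar_def[symmetric] Ph_def[symmetric]
    apply (intro conjI impI)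
    subgoal premises pos
      using local_max_over_controls[OF T_pos Ph pos] unfolding tstar_def[symmetric] by (metis zT wT)
    subgoal premises neg
      using local_max_over_controls[OF T_pos DERIV_minus[OF Ph]] neg
      unfolding tstar_def[symmetric] by (metis zT wT neg_0_less_iff_less neg_le_iff_le)
    done
qed

end
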